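(* Let $G=(G_1,\dots,G_n)$ be a mean zero Gaussian vector with strictly positive definite (irreducible) covariance matrix $\Gamma$, and let $\alpha\in\mathbb{R}$. For $t>0$ and a diagonal $n\times n$ matrix $S$ with diagonal entries $s_i=S_{i,i}\in[0,1]$, put $\Lambda=t(I-S)$ and $$\Phi(t,S)=\log \mathbb{E}\Big[\exp\Big(-\tfrac12\sum_{i=1}^n \Lambda_{i,i}(G_i+\alpha)^2\Big)\Big],$$ regarded as a power series in $s_1,\dots,s_n$ about $S=0$. Let $\Phi_1(t,S)=\Phi(t,S)|_{\alpha=0}$ and $\Phi_2(t,S)=\Phi(t,S)-\Phi_1(t,S)$, so that $\Phi=\Phi_1+\Phi_2$. Let $Q=Q(t)=[I+(t\Gamma)^{-1}]^{-1}=I-(I+t\Gamma)^{-1}$, let $D=(D_1,\dots,D_n)$ with $D_i=\sum_{k=1}^n(\Gamma^{-1})_{i,k}$ (the $i$-th row sum of $\Gamma^{-1}$), and let $\mathbf 1=(1,\dots,1)$. Then for all $\alpha\in\mathbb{R}$ and all $t$ sufficiently large, $$\Phi_2(t,S)=\frac{\alpha^2}{2}\Big(-\mathbf 1\cdot\Gamma^{-1}\cdot\mathbf 1^T + D\cdot\Big(\frac1t\sum_{m=1}^{\infty}(QS)^m\Big)\cdot D^T\Big)\big(1+O(1/t)\big),$$ where $O(1/t)$ refers to $t\to\infty$.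
   Context: All covariance matrices are assumed irreducible (not a direct sum of square matrices). $\mathbf 1$ denotes the $n$-dimensional vector with all entries $1$. *)

theory Defs
  imports "HOL-Analysis.Analysis"
begin

primrec matpow :: "real^'n^'n \<Rightarrow> nat \<Rightarrow> real^'n^'n" where
  "matpow A 0 = mat 1"
| "matpow A (Suc m) = A ** matpow A m"

definition pos_def_matrix :: "real^'n^'n \<Rightarrow> bool" where
  "pos_def_matrix A \<longleftrightarrow> transpose A = A \<and> (\<forall>x. x \<noteq> 0 \<longrightarrow> x \<bullet> (A *v x) > 0)"

text \<open>Irreducible: not (up to a permutation of indices) a direct sum of two square blocks,
  i.e. there is no splitting of the index set into two nonempty parts I, J with
  A i j = 0 for all i in I, j in J.\<close>
definition irreducible_matrix :: "real^'n^'n \<Rightarrow> bool" where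
  "irreducible_matrix A \<longleftrightarrow>
     \<not> (\<exists>I :: 'n set. I \<noteq> {} \<and> I \<noteq> UNIV \<and> (\<forall>i\<in>I. \<forall>j\<in>UNIV - I. A $ i $ j = 0))"

definition gauss_density :: "real^'n^'n \<Rightarrow> real^'n \<Rightarrow> real" where
  "gauss_density Gm x =
     exp (- (x \<bullet> (matrix_inv Gm *v x)) / 2) / sqrt ((2 * pi) ^ CARD('n) * det Gm)"

definition Phi :: "real^'n^'n \<Rightarrow> real \<Rightarrow> real \<Rightarrow> real^'n^'n \<Rightarrow> real" where
  "Phi Gm \<alpha> t S =
     (let \<Lambda> = t *\<^sub>R (mat 1 - S) in
      ln (\<integral>x. gauss_density Gm x *
                 exp (- (1/2) * (\<Sum>i\<in>UNIV. \<Lambda> $ i $ i * (x $ i + \<alpha>)\<^sup>2)) \<partial>lborel))"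

definition Phi1 :: "real^'n^'n \<Rightarrow> real \<Rightarrow> real^'n^'n \<Rightarrow> real" where
  "Phi1 Gm t S = Phi Gm 0 t S"

definition Phi2 :: "real^'n^'n \<Rightarrow> real \<Rightarrow> real \<Rightarrow> real^'n^'n \<Rightarrow> real" where
  "Phi2 Gm \<alpha> t S = Phi Gm \<alpha> t S - Phi1 Gm t S"

definition Qmat :: "real^'n^'n \<Rightarrow> real \<Rightarrow> real^'n^'n" where
  "Qmat Gm t = matrix_inv (mat 1 + matrix_inv (t *\<^sub>R Gm))"

definition Dvec :: "real^'n^'n \<Rightarrow> real^'n" where
  "Dvec Gm = (\<chi> i. \<Sum>k\<in>UNIV. matrix_inv Gm $ i $ k)"

definition ones :: "real^'n" where
  "ones = (\<chi> i. 1)"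

end

theory Submission
  imports Defs "HOL-Probability.Distributions"
begin

text \<open>Completing the square in the Gaussian integral shows that Phi2 is exactly
  -(alpha^2/2) D.y with y = (Gm^-1 + Lambda)^-1 Lambda 1: alpha only shifts the quadratic
  weight. The Neumann series of Q S converges because Q S strictly contracts the norm induced
  by Q^-1 = I + (t Gm)^-1, and summing it turns the bracket of the theorem into
  -D.y - (1/t) D.Gm^-1 y. Finally D.y = y.Gm^-1 y + (1 - y).Lambda (1 - y) dominates
  |D.Gm^-1 y| up to a constant independent of t and S, so the relative error is O(1/t).\<close>

section \<open>Matrix inverses and quadratic forms\<close>

lemma matrix_inv_right:
  fixes M :: "real^'n^'n"
  assumes "invertible M"
  shows "M ** matrix_inv M = mat 1"
  using someI_ex[OF assms[unfolded invertible_def]] unfolding matrix_inv_def by auto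

lemma matrix_inv_left:
  fixes M :: "real^'n^'n"
  assumes "invertible M"
  shows "matrix_inv M ** M = mat 1"
  using someI_ex[OF assms[unfolded invertible_def]] unfolding matrix_inv_def by auto

lemma matrix_inv_eqI:
  fixes M N :: "real^'n^'n"
  assumes "M ** N = mat 1"
  shows "matrix_inv M = N"
proof -
  have inv: "invertible M" using assms invertible_right_inverse by blast
  have "matrix_inv M = matrix_inv M ** (M ** N)" using assms by simp
  also have "\<dots> = N" by (simp add: matrix_mul_assoc matrix_inv_left[OF inv])
  finally show ?thesis .
qed

lemma matrix_inv_mult_vec_cancel:
  fixes M :: "real^'n^'n"
  assumes "invertible M"
  shows "M *v (matrix_inv M *v x) = x"
  by (simp add: matrix_vector_mul_assoc matrix_inv_right[OF assms])

lemma inner_symmetric_matrix_commute: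
  fixes M :: "real^'n^'n"
  assumes "transpose M = M"
  shows "x \<bullet> (M *v y) = y \<bullet> (M *v x)"
proof -
  have "x \<bullet> (M *v y) = (x v* M) \<bullet> y" by (simp add: dot_lmul_matrix)
  also have "x v* M = transpose M *v x" by simp
  finally show ?thesis using assms by (simp add: inner_commute)
qed

lemma transpose_add_symmetric:
  fixes A B :: "real^'n^'n"
  assumes "transpose A = A" "transpose B = B"
  shows "transpose (A + B) = A + B"
  using assms by (simp add: transpose_def vec_eq_iff)

lemma transpose_matrix_inv_symmetric:
  fixes M :: "real^'n^'n"
  assumes "invertible M" "transpose M = M"
  shows "transpose (matrix_inv M) = matrix_inv M"
proof -
  have "M ** transpose (matrix_inv M) = mat 1"
    by (metis assms(2) matrix_inv_left[OF assms(1)] matrix_transpose_mul transpose_mat)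
  then show ?thesis using matrix_inv_eqI by metis
qed

lemma matrix_mul_add_rdistrib: "((A::real^'n^'n) + B) ** C = A ** C + B ** C"
  by (simp add: matrix_matrix_mult_def vec_eq_iff distrib_right sum.distrib)

lemma matrix_mul_diff_ldistrib: "(C::real^'n^'n) ** (A - B) = C ** A - C ** B"
  by (simp add: matrix_matrix_mult_def vec_eq_iff right_diff_distrib sum_subtractf)

lemma matrix_vector_mult_bounded: "\<exists>K\<ge>0. \<forall>x. norm ((A::real^'n^'n) *v x) \<le> K * norm x"
proof -
  have "bounded_linear ((*v) A)" using matrix_vector_mul_linear linear_conv_bounded_linear by blast
  then obtain K where "K > 0" "\<And>x. norm (A *v x) \<le> norm x * K"
    using bounded_linear.pos_bounded by blast
  then show ?thesis by (metis less_imp_le mult.commute)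
qed

lemma nonneg_quadratic_discriminant:
  fixes a b c :: real
  assumes h: "\<And>l. a + 2 * l * b + l\<^sup>2 * c \<ge> 0" and c: "c \<ge> 0"
  shows "b\<^sup>2 \<le> a * c"
proof (cases "c = 0")
  case True
  have "b = 0"
  proof (rule ccontr)
    assume b: "b \<noteq> 0"
    have "a + 2 * (- (a + 1) / (2 * b)) * b + (- (a + 1) / (2 * b))\<^sup>2 * c \<ge> 0" by (rule h)
    then show False using b True by (simp add: field_simps)
  qed
  then show ?thesis using True by simp
next
  case False
  then have cp: "c > 0" using c by simp
  have "a + 2 * (- b / c) * b + (- b / c)\<^sup>2 * c \<ge> 0" by (rule h)
  then have "a - b\<^sup>2 / c \<ge> 0" using cp by (simp add: power2_eq_square field_simps)
  then show ?thesis using cp by (simp add: field_simps)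
qed

lemma quadratic_form_Cauchy_Schwarz:
  fixes M :: "real^'n^'n"
  assumes sM: "transpose M = M" and pM: "\<And>x. x \<bullet> (M *v x) \<ge> 0"
  shows "(u \<bullet> (M *v w))\<^sup>2 \<le> (u \<bullet> (M *v u)) * (w \<bullet> (M *v w))"
proof (rule nonneg_quadratic_discriminant[OF _ pM])
  fix l :: real
  have "(u + l *\<^sub>R w) \<bullet> (M *v (u + l *\<^sub>R w))
      = u \<bullet> (M *v u) + 2 * l * (u \<bullet> (M *v w)) + l\<^sup>2 * (w \<bullet> (M *v w))"
    using inner_symmetric_matrix_commute[OF sM, of w u]
    by (simp add: matrix_vector_right_distrib matrix_vector_mult_scaleR inner_add_left inner_add_right
        power2_eq_square algebra_simps)
  then show "u \<bullet> (M *v u) + 2 * l * (u \<bullet> (M *v w)) + l\<^sup>2 * (w \<bullet> (M *v w)) \<ge> 0"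
    using pM[of "u + l *\<^sub>R w"] by simp
qed

lemma pos_def_matrixD:
  assumes "pos_def_matrix M"
  shows "transpose M = M" "\<And>x. x \<noteq> 0 \<Longrightarrow> x \<bullet> (M *v x) > 0" "\<And>x. x \<bullet> (M *v x) \<ge> 0"
proof -
  show "transpose M = M" "\<And>x. x \<noteq> 0 \<Longrightarrow> x \<bullet> (M *v x) > 0"
    using assms unfolding pos_def_matrix_def by auto
  then show "x \<bullet> (M *v x) \<ge> 0" for x
    by (cases "x = 0") (auto intro: less_imp_le)
qed

lemma invertible_if_quadratic_pos:
  fixes M :: "real^'n^'n"
  assumes "\<And>x. x \<noteq> 0 \<Longrightarrow> x \<bullet> (M *v x) > 0"
  shows "invertible M"
proof -
  have "inj ((*v) M)"
    by (rule injI) (metis assms inner_zero_right less_irrefl matrix_vector_mult_diff_distrib right_minus_eq)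
  then show ?thesis using matrix_left_invertible_injective invertible_left_inverse by blast
qed

lemma quadratic_pos_coercive:
  fixes M :: "real^'n^'n"
  assumes "\<And>x. x \<noteq> 0 \<Longrightarrow> x \<bullet> (M *v x) > 0"
  obtains \<mu> where "\<mu> > 0" "\<And>x. x \<bullet> (M *v x) \<ge> \<mu> * (norm x)\<^sup>2"
proof -
  have cont: "continuous_on (sphere 0 1) (\<lambda>x::real^'n. x \<bullet> (M *v x))"
    by (intro continuous_intros linear_continuous_on bounded_linear_intros)
  obtain u where u: "u \<in> sphere 0 1" and umin: "\<forall>y\<in>sphere 0 1. u \<bullet> (M *v u) \<le> y \<bullet> (M *v y)"
    using continuous_attains_inf[OF compact_sphere _ cont] by fastforce
  have pos: "u \<bullet> (M *v u) > 0" using u assms[of u] by fastforce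
  have "u \<bullet> (M *v u) * (norm x)\<^sup>2 \<le> x \<bullet> (M *v x)" for x :: "real^'n"
  proof (cases "x = 0")
    case False
    let ?y = "(1 / norm x) *\<^sub>R x"
    have "?y \<in> sphere 0 1" using False by simp
    then have "u \<bullet> (M *v u) \<le> ?y \<bullet> (M *v ?y)" using umin by blast
    also have "?y \<bullet> (M *v ?y) = (x \<bullet> (M *v x)) / (norm x)\<^sup>2"
      by (simp add: matrix_vector_mult_scaleR power2_eq_square)
    finally show ?thesis using False by (simp add: field_simps)
  qed simp
  with pos that show ?thesis by blast
qed

text \<open>The determinant cannot vanish along the segment from the identity to M,
  since every matrix on it has a positive quadratic form.\<close>
lemma det_pos_if_quadratic_pos:
  fixes M :: "real^'n^'n"
  assumes pM: "\<And>x. x \<noteq> 0 \<Longrightarrow> x \<bullet> (M *v x) > 0"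
  shows "det M > 0"
proof (rule ccontr)
  assume "\<not> det M > 0"
  define f where "f = (\<lambda>s::real. det ((1 - s) *\<^sub>R mat 1 + s *\<^sub>R M))"
  have ent: "((1 - s) *\<^sub>R mat 1 + s *\<^sub>R M) $ i $ j = (1 - s) * (mat 1 :: real^'n^'n) $ i $ j + s * M $ i $ j"
    for s i j by simp
  have cont: "continuous_on {0..1} f"
    unfolding f_def det_def ent by (intro continuous_intros)
  have "f 1 \<le> 0" "0 \<le> f 0" using \<open>\<not> det M > 0\<close> by (simp_all add: f_def)
  then obtain s where s: "0 \<le> s" "s \<le> 1" "f s = 0"
    using IVT2'[of f 1 0 0, OF _ _ _ cont] by auto
  define N where "N = (1 - s) *\<^sub>R mat 1 + s *\<^sub>R (M :: real^'n^'n)"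
  have "x \<bullet> (N *v x) > 0" if "x \<noteq> 0" for x
  proof -
    have "x \<bullet> (N *v x) = (1 - s) * (x \<bullet> x) + s * (x \<bullet> (M *v x))"
      by (simp add: N_def matrix_vector_mult_add_rdistrib scaleR_matrix_vector_assoc[symmetric] inner_add_right)
    moreover have "x \<bullet> x > 0" "x \<bullet> (M *v x) > 0" using pM that by auto
    ultimately show ?thesis using s
      by (cases "s = 0") (auto intro!: add_nonneg_pos)
  qed
  then have "det N \<noteq> 0" using invertible_if_quadratic_pos invertible_det_nz by blast
  with s(3) show False by (simp add: f_def N_def)
qed

lemma pos_def_matrix_inv:
  fixes M :: "real^'n^'n"
  assumes "pos_def_matrix M"
  shows "pos_def_matrix (matrix_inv M)"
  unfolding pos_def_matrix_def
proof (intro conjI allI impI)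
  note M = pos_def_matrixD[OF assms]
  have iM: "invertible M" using invertible_if_quadratic_pos M(2) by blast
  show "transpose (matrix_inv M) = matrix_inv M" using transpose_matrix_inv_symmetric[OF iM M(1)] .
  fix x :: "real^'n" assume x: "x \<noteq> 0"
  define z where "z = matrix_inv M *v x"
  have Mz: "M *v z = x" unfolding z_def by (rule matrix_inv_mult_vec_cancel[OF iM])
  then have "z \<bullet> (M *v z) > 0" using x M(2)[of z] by fastforce
  then show "x \<bullet> (matrix_inv M *v x) > 0" using Mz by (simp add: z_def inner_commute)
qed

lemma pos_def_matrix_add_nonneg:
  fixes A L :: "real^'n^'n"
  assumes "pos_def_matrix A" "transpose L = L" "\<And>x. x \<bullet> (L *v x) \<ge> 0"
  shows "pos_def_matrix (A + L)"
  using assms pos_def_matrixD[OF assms(1)] unfolding pos_def_matrix_def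
  by (auto simp: transpose_add_symmetric matrix_vector_mult_add_rdistrib inner_add_right add_pos_nonneg)

lemma pos_def_matrix_invertible: "pos_def_matrix M \<Longrightarrow> invertible M"
  using invertible_if_quadratic_pos pos_def_matrixD(2) by blast

section \<open>Diagonal matrices\<close>

definition diag_mat :: "real^'n^'n \<Rightarrow> bool" where
  "diag_mat S \<longleftrightarrow> (\<forall>i j. i \<noteq> j \<longrightarrow> S $ i $ j = 0)"

lemma diag_mat_mult_vec:
  assumes "diag_mat S"
  shows "S *v x = (\<chi> i. S $ i $ i * x $ i)"
proof -
  have "(S *v x) $ i = S $ i $ i * x $ i" for i
  proof -
    have "(S *v x) $ i = (\<Sum>j\<in>UNIV. S $ i $ j * x $ j)"
      by (simp add: matrix_vector_mult_def)
    also have "\<dots> = (\<Sum>j\<in>UNIV. if j = i then S $ i $ i * x $ i else 0)"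
      by (rule sum.cong) (use assms in \<open>auto simp: diag_mat_def\<close>)
    finally show ?thesis by simp
  qed
  then show ?thesis by (simp add: vec_eq_iff)
qed

lemma inner_diag_mat:
  "diag_mat S \<Longrightarrow> x \<bullet> (S *v y) = (\<Sum>i\<in>UNIV. S $ i $ i * x $ i * y $ i)"
  by (simp add: diag_mat_mult_vec inner_vec_def mult_ac)

lemma transpose_diag_mat: "diag_mat S \<Longrightarrow> transpose S = S"
  by (auto simp: diag_mat_def transpose_def vec_eq_iff) (metis)

lemma diag_mat_quadratic_nonneg:
  assumes "diag_mat S" "\<And>i. S $ i $ i \<ge> 0"
  shows "x \<bullet> (S *v x) \<ge> 0"
  unfolding inner_diag_mat[OF assms(1)] using assms(2)
  by (auto intro!: sum_nonneg simp: mult.assoc)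

lemma diag_mat_scaleR_diff_nonneg:
  assumes "diag_mat S" "t \<ge> 0" "\<And>i. S $ i $ i \<le> 1"
  shows "diag_mat (t *\<^sub>R (mat 1 - S))" "(t *\<^sub>R (mat 1 - S)) $ i $ i \<ge> 0"
  using assms by (auto simp: diag_mat_def mat_def)

lemma norm_diag_mat_mult_le:
  assumes "diag_mat S" "\<And>i. \<bar>S $ i $ i\<bar> \<le> 1"
  shows "norm (S *v x) \<le> norm x"
proof -
  have "(norm (S *v x))\<^sup>2 = (\<Sum>i\<in>UNIV. (S $ i $ i * x $ i)\<^sup>2)"
    unfolding power2_norm_eq_inner diag_mat_mult_vec[OF assms(1)]
    by (simp add: inner_vec_def power2_eq_square)
  also have "\<dots> \<le> (\<Sum>i\<in>UNIV. (x $ i)\<^sup>2)"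
  proof (intro sum_mono)
    fix i
    have "(S $ i $ i)\<^sup>2 \<le> 1" using assms(2)[of i] by (simp add: abs_square_le_1)
    then show "(S $ i $ i * x $ i)\<^sup>2 \<le> (x $ i)\<^sup>2"
      by (simp add: power_mult_distrib mult_left_le_one_le)
  qed
  also have "\<dots> = (norm x)\<^sup>2"
    unfolding power2_norm_eq_inner by (simp add: inner_vec_def power2_eq_square)
  finally show ?thesis by (simp add: power2_le_iff_abs_le)
qed

lemma diag_mat_quadratic_le_trace:
  assumes "diag_mat L" "\<And>i. L $ i $ i \<ge> 0"
  shows "x \<bullet> (L *v x) \<le> (x \<bullet> x) * (\<Sum>i\<in>UNIV. L $ i $ i)"
proof -
  have "x \<bullet> (L *v x) = (\<Sum>i\<in>UNIV. L $ i $ i * (x $ i)\<^sup>2)"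
    unfolding inner_diag_mat[OF assms(1)] by (simp add: power2_eq_square mult_ac)
  also have "\<dots> \<le> (\<Sum>i\<in>UNIV. L $ i $ i * (x \<bullet> x))"
  proof (intro sum_mono mult_left_mono assms(2))
    fix i
    have "\<bar>x $ i\<bar> \<le> norm x" by (rule component_le_norm_cart)
    then show "(x $ i)\<^sup>2 \<le> x \<bullet> x"
      by (metis abs_ge_zero power2_abs power_mono power2_norm_eq_inner)
  qed
  also have "\<dots> = (x \<bullet> x) * (\<Sum>i\<in>UNIV. L $ i $ i)" by (simp add: sum_distrib_left mult_ac)
  finally show ?thesis .
qed

lemma diag_mat_trace_le:
  assumes "diag_mat L" "\<And>i. L $ i $ i \<ge> 0" and y: "norm y \<le> 1/2"
  shows "(\<Sum>i\<in>UNIV. L $ i $ i) \<le> 4 * ((ones - y) \<bullet> (L *v (ones - y)))"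
proof -
  have "L $ i $ i \<le> 4 * (L $ i $ i * (1 - y $ i)\<^sup>2)" for i
  proof -
    have "\<bar>y $ i\<bar> \<le> 1/2" using component_le_norm_cart[of y i] y by linarith
    then have "1/2 \<le> 1 - y $ i" by (simp add: abs_le_iff)
    then have "(1/2)\<^sup>2 \<le> (1 - y $ i)\<^sup>2" by (intro power_mono) auto
    then have "1 \<le> 4 * (1 - y $ i)\<^sup>2" by (simp add: power2_eq_square)
    then show ?thesis using assms(2)[of i] mult_left_mono by fastforce
  qed
  then have "(\<Sum>i\<in>UNIV. L $ i $ i) \<le> (\<Sum>i\<in>UNIV. 4 * (L $ i $ i * (1 - y $ i)\<^sup>2))"
    by (intro sum_mono)
  also have "\<dots> = 4 * ((ones - y) \<bullet> (L *v (ones - y)))"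
    unfolding inner_diag_mat[OF assms(1)]
    by (simp add: sum_distrib_left power2_eq_square mult_ac ones_def)
  finally show ?thesis .
qed

section \<open>Gaussian integrals\<close>

lemma integrable_exp_neg_mult_square:
  fixes c :: real assumes c: "c > 0"
  shows "integrable lborel (\<lambda>x::real. exp (- c * x\<^sup>2))"
proof -
  define \<sigma> where "\<sigma> = sqrt (1 / (2 * c))"
  have s: "\<sigma> > 0" "\<sigma>\<^sup>2 = 1 / (2 * c)" using c by (simp_all add: \<sigma>_def)
  have "integrable lborel (\<lambda>x. sqrt (2 * pi * \<sigma>\<^sup>2) * normal_density 0 \<sigma> x)"
    using s by (intro integrable_mult_right integrable_normal_density) auto
  moreover have "sqrt (2 * pi * \<sigma>\<^sup>2) * normal_density 0 \<sigma> x = exp (- c * x\<^sup>2)" for x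
  proof -
    have "x\<^sup>2 / (2 * \<sigma>\<^sup>2) = c * x\<^sup>2" using c s(1) by (simp add: s(2) field_simps)
    then show ?thesis using s c by (simp add: normal_density_def)
  qed
  ultimately show ?thesis by simp
qed

lemma integrable_exp_neg_mult_norm_square:
  fixes c :: real assumes c: "c > 0"
  shows "integrable lborel (\<lambda>x::'a::euclidean_space. exp (- c * (norm x)\<^sup>2))"
proof (unfold integrable_iff_bounded, intro conjI)
  show "(\<lambda>x::'a. exp (- c * (norm x)\<^sup>2)) \<in> borel_measurable lborel" by measurable
  have eq: "ennreal (norm (exp (- c * (norm x)\<^sup>2))) = (\<Prod>b\<in>Basis. ennreal (exp (- c * (x \<bullet> b)\<^sup>2)))"
    for x :: 'a
  proof -
    have "(norm x)\<^sup>2 = (\<Sum>b\<in>Basis. (x \<bullet> b)\<^sup>2)"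
      unfolding power2_norm_eq_inner by (subst euclidean_inner) (simp add: power2_eq_square)
    then have "exp (- c * (norm x)\<^sup>2) = (\<Prod>b\<in>Basis. exp (- c * (x \<bullet> b)\<^sup>2))"
      by (simp add: sum_distrib_left exp_sum[symmetric])
    then show ?thesis by (simp add: prod_ennreal abs_of_nonneg prod_nonneg)
  qed
  have "(\<integral>\<^sup>+x. ennreal (exp (- c * x\<^sup>2)) \<partial>lborel) < \<infinity>"
    using integrable_exp_neg_mult_square[OF c] unfolding integrable_iff_bounded by simp
  then have "(\<Prod>b\<in>(Basis::'a set). (\<integral>\<^sup>+x. ennreal (exp (- c * x\<^sup>2)) \<partial>lborel)) < \<infinity>"
    by (simp add: power_less_top_ennreal)
  also have "(\<Prod>b\<in>(Basis::'a set). (\<integral>\<^sup>+x. ennreal (exp (- c * x\<^sup>2)) \<partial>lborel))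
      = (\<integral>\<^sup>+x. (\<Prod>b\<in>Basis. ennreal (exp (- c * ((x::'a) \<bullet> b)\<^sup>2))) \<partial>lborel)"
    by (rule nn_integral_lborel_prod[where f="\<lambda>b x. ennreal (exp (- c * x\<^sup>2))", symmetric]) auto
  finally show "(\<integral>\<^sup>+x. ennreal (norm (exp (- c * (norm (x::'a))\<^sup>2))) \<partial>lborel) < \<infinity>"
    by (simp only: eq)
qed

lemma quadratic_form_measurable[measurable]:
  "(\<lambda>x::real^'n. x \<bullet> (M *v x)) \<in> borel_measurable borel"
  by (intro borel_measurable_continuous_onI continuous_intros linear_continuous_on bounded_linear_intros)

lemma gaussian_form_integrable_pos:
  fixes B :: "real^'n^'n"
  assumes "\<And>x. x \<noteq> 0 \<Longrightarrow> x \<bullet> (B *v x) > 0"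
  shows "integrable lborel (\<lambda>x. exp (- (x \<bullet> (B *v x)) / 2))"
    and "(\<integral>x. exp (- (x \<bullet> (B *v x)) / 2) \<partial>lborel) > 0"
proof -
  obtain \<mu> where mu: "\<mu> > 0" "\<And>x. x \<bullet> (B *v x) \<ge> \<mu> * (norm x)\<^sup>2"
    using quadratic_pos_coercive[OF assms] by blast
  show int: "integrable lborel (\<lambda>x. exp (- (x \<bullet> (B *v x)) / 2))"
  proof (rule Bochner_Integration.integrable_bound[OF integrable_exp_neg_mult_norm_square[of "\<mu>/2"]])
    show "AE x in lborel. norm (exp (- (x \<bullet> (B *v x)) / 2)) \<le> norm (exp (- (\<mu>/2) * (norm x)\<^sup>2))"
      using mu(2) by (auto intro!: AE_I2)
  qed (use mu in auto)
  have "(\<integral>x. exp (- (x \<bullet> (B *v x)) / 2) \<partial>lborel) \<noteq> 0"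
  proof
    assume "(\<integral>x. exp (- (x \<bullet> (B *v x)) / 2) \<partial>lborel) = 0"
    then have "AE (x::real^'n) in lborel. False"
      using integral_nonneg_eq_0_iff_AE[OF int] by auto
    then have "ae_filter lborel = (bot :: (real^'n) filter)" using trivial_limit_def by blast
    then show False unfolding ae_filter_eq_bot_iff by simp
  qed
  moreover have "(\<integral>x. exp (- (x \<bullet> (B *v x)) / 2) \<partial>lborel) \<ge> 0"
    by (intro integral_nonneg_AE) auto
  ultimately show "(\<integral>x. exp (- (x \<bullet> (B *v x)) / 2) \<partial>lborel) > 0" by linarith
qed

lemma lborel_integral_translate:
  fixes f :: "real^'n \<Rightarrow> real"
  assumes [measurable]: "f \<in> borel_measurable borel"
  shows "(\<integral>x. f (w + x) \<partial>lborel) = (\<integral>x. f x \<partial>lborel)"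
proof -
  have "(\<integral>x. f x \<partial>lborel) = (\<integral>x. f x \<partial>(distr lborel borel ((+) w)))"
    by (simp add: lborel_distr_plus)
  also have "\<dots> = (\<integral>x. f (w + x) \<partial>lborel)"
    by (rule integral_distr) auto
  finally show ?thesis by simp
qed

lemma quadratic_complete_square:
  fixes A L :: "real^'n^'n"
  assumes sA: "transpose A = A" and sL: "transpose L = L"
    and y: "(A + L) *v y = L *v v"
  shows "x \<bullet> (A *v x) + (x + v) \<bullet> (L *v (x + v))
        = (x + y) \<bullet> ((A + L) *v (x + y)) + (v \<bullet> (L *v v) - (L *v v) \<bullet> y)"
proof -
  have e1: "y \<bullet> ((A + L) *v x) = x \<bullet> (L *v v)"
    using inner_symmetric_matrix_commute[OF transpose_add_symmetric[OF sA sL], of y x] y by simp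
  have e2: "v \<bullet> (L *v x) = x \<bullet> (L *v v)" using inner_symmetric_matrix_commute[OF sL, of v x] .
  have "(x + y) \<bullet> ((A + L) *v (x + y))
      = x \<bullet> (A *v x) + x \<bullet> (L *v x) + 2 * (x \<bullet> (L *v v)) + y \<bullet> (L *v v)"
    using e1 y by (simp add: matrix_vector_right_distrib matrix_vector_mult_add_rdistrib
        inner_add_left inner_add_right)
  moreover have "(x + v) \<bullet> (L *v (x + v)) = x \<bullet> (L *v x) + 2 * (x \<bullet> (L *v v)) + v \<bullet> (L *v v)"
    using e2 by (simp add: matrix_vector_right_distrib inner_add_left inner_add_right)
  ultimately show ?thesis by (simp add: inner_commute)
qed

lemma gaussian_form_shift_integral:
  fixes A L :: "real^'n^'n" and v :: "real^'n" and c :: real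
  assumes A: "pos_def_matrix A" and sL: "transpose L = L" and pL: "\<And>x. x \<bullet> (L *v x) \<ge> 0"
  defines "y \<equiv> matrix_inv (A + L) *v (L *v v)"
  shows "(\<integral>x. c * exp (- (x \<bullet> (A *v x)) / 2) * exp (- (1/2) * ((x + v) \<bullet> (L *v (x + v)))) \<partial>lborel)
       = c * exp (- (v \<bullet> (L *v v) - (L *v v) \<bullet> y) / 2)
           * (\<integral>x. exp (- (x \<bullet> ((A + L) *v x)) / 2) \<partial>lborel)"
proof -
  define \<kappa> where "\<kappa> = v \<bullet> (L *v v) - (L *v v) \<bullet> y"
  define g where "g = (\<lambda>x. exp (- (x \<bullet> ((A + L) *v x)) / 2))"
  have B: "pos_def_matrix (A + L)" using pos_def_matrix_add_nonneg[OF A sL pL] .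
  have y: "(A + L) *v y = L *v v"
    unfolding y_def by (rule matrix_inv_mult_vec_cancel[OF pos_def_matrix_invertible[OF B]])
  have "c * exp (- (x \<bullet> (A *v x)) / 2) * exp (- (1/2) * ((x + v) \<bullet> (L *v (x + v))))
      = (c * exp (- \<kappa> / 2)) * g (y + x)" for x
    using quadratic_complete_square[OF pos_def_matrixD(1)[OF A] sL y, of x]
    by (simp add: g_def \<kappa>_def exp_add[symmetric] field_simps add.commute)
  then have "(\<integral>x. c * exp (- (x \<bullet> (A *v x)) / 2) * exp (- (1/2) * ((x + v) \<bullet> (L *v (x + v)))) \<partial>lborel)
      = (\<integral>x. (c * exp (- \<kappa> / 2)) * g (y + x) \<partial>lborel)" by (simp only:)
  also have "\<dots> = (c * exp (- \<kappa> / 2)) * (\<integral>x. g (y + x) \<partial>lborel)" by simp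
  also have "(\<integral>x. g (y + x) \<partial>lborel) = (\<integral>x. g x \<partial>lborel)"
    by (rule lborel_integral_translate) (simp add: g_def)
  finally show ?thesis unfolding g_def \<kappa>_def .
qed

section \<open>Closed form of Phi2\<close>

lemma Dvec_eq: "Dvec Gm = matrix_inv Gm *v ones"
  by (simp add: Dvec_def ones_def matrix_vector_mult_def vec_eq_iff)

lemma shift_energy_eq:
  fixes A L :: "real^'n^'n"
  assumes sA: "transpose A = A" and sL: "transpose L = L" and y: "(A + L) *v y = L *v ones"
  shows "ones \<bullet> (L *v ones) - (L *v ones) \<bullet> y = (A *v ones) \<bullet> y"
proof -
  have Ay: "A *v y = L *v ones - L *v y" using y
    by (simp add: matrix_vector_mult_add_rdistrib eq_diff_eq)
  have "(A *v ones) \<bullet> y = ones \<bullet> (A *v y)"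
    using inner_symmetric_matrix_commute[OF sA, of y ones] by (simp add: inner_commute)
  also have "\<dots> = ones \<bullet> (L *v ones) - ones \<bullet> (L *v y)" unfolding Ay by (simp add: inner_diff_right)
  also have "ones \<bullet> (L *v y) = (L *v ones) \<bullet> y"
    using inner_symmetric_matrix_commute[OF sL, of ones y] by (simp add: inner_commute)
  finally show ?thesis by simp
qed

lemma Phi_eq:
  fixes Gm S :: "real^'n^'n"
  assumes pd: "pos_def_matrix Gm" and S: "diag_mat S" "\<And>i. S $ i $ i \<le> 1" and t: "t \<ge> 0"
  defines "\<Lambda> \<equiv> t *\<^sub>R (mat 1 - S)"
  defines "y \<equiv> matrix_inv (matrix_inv Gm + \<Lambda>) *v (\<Lambda> *v ones)"
  shows "Phi Gm \<alpha> t S = - (\<alpha>\<^sup>2 / 2) * (Dvec Gm \<bullet> y)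
           + ln ((\<integral>x. exp (- (x \<bullet> ((matrix_inv Gm + \<Lambda>) *v x)) / 2) \<partial>lborel)
                 / sqrt ((2 * pi) ^ CARD('n) * det Gm))"
proof -
  define A where "A = matrix_inv Gm"
  define c where "c = 1 / sqrt ((2 * pi) ^ CARD('n) * det Gm)"
  define J where "J = (\<integral>x. exp (- (x \<bullet> ((A + \<Lambda>) *v x)) / 2) \<partial>lborel)"
  have A: "pos_def_matrix A" unfolding A_def using pos_def_matrix_inv[OF pd] .
  have L: "diag_mat \<Lambda>" "\<And>i. \<Lambda> $ i $ i \<ge> 0"
    unfolding \<Lambda>_def using diag_mat_scaleR_diff_nonneg[OF S(1) t S(2)] by auto
  note sL = transpose_diag_mat[OF L(1)] and pL = diag_mat_quadratic_nonneg[OF L]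
  have B: "pos_def_matrix (A + \<Lambda>)" using pos_def_matrix_add_nonneg[OF A sL pL] .
  have y: "(A + \<Lambda>) *v y = \<Lambda> *v ones"
    unfolding y_def A_def[symmetric] by (rule matrix_inv_mult_vec_cancel[OF pos_def_matrix_invertible[OF B]])
  have c: "c > 0"
    using det_pos_if_quadratic_pos[OF pos_def_matrixD(2)[OF pd]] by (simp add: c_def)
  have J: "J > 0" unfolding J_def by (rule gaussian_form_integrable_pos(2)[OF pos_def_matrixD(2)[OF B]])
  have weight: "(\<Sum>i\<in>UNIV. \<Lambda> $ i $ i * (x $ i + \<alpha>)\<^sup>2)
      = (x + \<alpha> *\<^sub>R ones) \<bullet> (\<Lambda> *v (x + \<alpha> *\<^sub>R ones))" for x :: "real^'n"
    unfolding inner_diag_mat[OF L(1)] by (simp add: ones_def power2_eq_square mult_ac)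
  have energy: "(\<alpha> *\<^sub>R ones) \<bullet> (\<Lambda> *v (\<alpha> *\<^sub>R ones))
      - (\<Lambda> *v (\<alpha> *\<^sub>R ones)) \<bullet> (matrix_inv (A + \<Lambda>) *v (\<Lambda> *v (\<alpha> *\<^sub>R ones)))
      = \<alpha>\<^sup>2 * (Dvec Gm \<bullet> y)"
    using shift_energy_eq[OF pos_def_matrixD(1)[OF A] sL y]
    by (simp add: y_def A_def Dvec_eq matrix_vector_mult_scaleR power2_eq_square algebra_simps)
  have density: "gauss_density Gm x * exp (- (1/2) * (\<Sum>i\<in>UNIV. \<Lambda> $ i $ i * (x $ i + \<alpha>)\<^sup>2))
      = c * exp (- (x \<bullet> (A *v x)) / 2) * exp (- (1/2) * ((x + \<alpha> *\<^sub>R ones) \<bullet> (\<Lambda> *v (x + \<alpha> *\<^sub>R ones))))"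
    for x
    unfolding weight gauss_density_def c_def A_def by simp
  have "Phi Gm \<alpha> t S = ln (c * exp (- ((\<alpha> *\<^sub>R ones) \<bullet> (\<Lambda> *v (\<alpha> *\<^sub>R ones))
      - (\<Lambda> *v (\<alpha> *\<^sub>R ones)) \<bullet> (matrix_inv (A + \<Lambda>) *v (\<Lambda> *v (\<alpha> *\<^sub>R ones)))) / 2) * J)"
    unfolding Phi_def Let_def \<Lambda>_def[symmetric] density gaussian_form_shift_integral[OF A sL pL] J_def ..
  also have "\<dots> = ln (c * exp (- (\<alpha>\<^sup>2 * (Dvec Gm \<bullet> y)) / 2) * J)" unfolding energy ..
  also have "\<dots> = - (\<alpha>\<^sup>2 / 2) * (Dvec Gm \<bullet> y) + ln (c * J)"
    using c J by (simp add: ln_mult)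
  finally show ?thesis by (simp add: c_def J_def A_def)
qed

lemma Phi2_eq:
  fixes Gm S :: "real^'n^'n"
  assumes "pos_def_matrix Gm" "diag_mat S" "\<And>i. S $ i $ i \<le> 1" "t \<ge> 0"
  shows "Phi2 Gm \<alpha> t S = - (\<alpha>\<^sup>2 / 2) * (Dvec Gm \<bullet>
           (matrix_inv (matrix_inv Gm + t *\<^sub>R (mat 1 - S)) *v (t *\<^sub>R (mat 1 - S) *v ones)))"
  unfolding Phi2_def Phi1_def using Phi_eq[OF assms] by simp

section \<open>The Neumann series of Q S\<close>

lemma matpow_Suc_right: "matpow P (Suc m) = matpow P m ** P"
proof -
  have "matpow P m ** P = P ** matpow P m"
    by (induction m) (simp_all add: matrix_mul_assoc[symmetric])
  then show ?thesis by simp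
qed

lemma bounded_linear_matrix_mult_right: "bounded_linear (\<lambda>X::real^'n^'n. X ** M)"
proof -
  have "linear (\<lambda>X::real^'n^'n. X ** M)"
    by (rule linearI) (simp_all add: matrix_mul_add_rdistrib scalar_matrix_assoc)
  then show ?thesis using linear_conv_bounded_linear by blast
qed

lemma summable_matpow_Suc_if_geometric:
  fixes P :: "real^'n^'n"
  assumes b: "\<And>m u. (norm (matpow P m *v u))\<^sup>2 \<le> c * \<rho> ^ m * (norm u)\<^sup>2"
    and r: "0 \<le> \<rho>" "\<rho> < 1" and c: "c \<ge> 0"
  shows "summable (\<lambda>m. matpow P (Suc m))"
proof -
  have ent: "\<bar>matpow P m $ i $ j\<bar> \<le> sqrt c * sqrt \<rho> ^ m" for m i j
  proof -
    have "matpow P m $ i $ j = (matpow P m *v axis j 1) $ i"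
      by (simp add: matrix_vector_mult_def axis_def if_distrib cong: if_cong)
    then have "\<bar>matpow P m $ i $ j\<bar> \<le> norm (matpow P m *v axis j 1)"
      using component_le_norm_cart by metis
    also have "\<dots> \<le> sqrt (c * \<rho> ^ m)"
      using b[of m "axis j 1"] by (simp add: real_le_rsqrt)
    finally show ?thesis by (simp add: real_sqrt_mult real_sqrt_power)
  qed
  have nb: "norm (matpow P m) \<le> real (CARD('n)) * real (CARD('n)) * (sqrt c * sqrt \<rho> ^ m)" for m
  proof -
    have "norm (matpow P m) \<le> (\<Sum>i\<in>UNIV. norm (matpow P m $ i))"
      by (simp add: norm_vec_def L2_set_le_sum)
    also have "\<dots> \<le> (\<Sum>i\<in>(UNIV::'n set). \<Sum>j\<in>(UNIV::'n set). \<bar>matpow P m $ i $ j\<bar>)"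
      by (intro sum_mono norm_le_l1_cart)
    also have "\<dots> \<le> (\<Sum>i\<in>(UNIV::'n set). \<Sum>j\<in>(UNIV::'n set). sqrt c * sqrt \<rho> ^ m)"
      by (intro sum_mono ent)
    finally show ?thesis by simp
  qed
  have "summable (\<lambda>m. real (CARD('n)) * real (CARD('n)) * (sqrt c * sqrt \<rho> ^ Suc m))"
    using r by (intro summable_mult summable_geometric) simp
  then show ?thesis
    by (rule summable_comparison_test'[where N=0]) (use nb[of "Suc _"] in simp)
qed

lemma neumann_series_left_inverse:
  fixes P :: "real^'n^'n"
  assumes sm: "summable (\<lambda>m. matpow P (Suc m))"
  shows "(mat 1 + (\<Sum>m. matpow P (Suc m))) ** (mat 1 - P) = mat 1"
proof -
  define N where "N = (\<Sum>m. matpow P (Suc m))"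
  have "(\<lambda>m. matpow P (Suc m) ** (mat 1 - P)) sums (N ** (mat 1 - P))"
    using bounded_linear.sums[OF bounded_linear_matrix_mult_right summable_sums[OF sm]] unfolding N_def .
  moreover have "matpow P (Suc m) ** (mat 1 - P) = matpow P (Suc m) - matpow P (Suc (Suc m))" for m
    by (simp only: matrix_mul_diff_ldistrib matrix_mul_rid matpow_Suc_right[of P "Suc m"])
  moreover have "(\<lambda>m. matpow P (Suc m) - matpow P (Suc (Suc m))) sums (matpow P (Suc 0) - 0)"
    by (rule telescope_sums'[OF summable_LIMSEQ_zero[OF sm]])
  ultimately have "N ** (mat 1 - P) = P" using sums_unique2 by fastforce
  then show ?thesis
    unfolding N_def[symmetric] by (simp only: matrix_mul_add_rdistrib matrix_mul_lid) simp
qed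

lemma resolvent_quadratic_eq:
  fixes A :: "real^'n^'n"
  shows "x \<bullet> ((mat 1 + (1/t) *\<^sub>R A) *v x) = (norm x)\<^sup>2 + (1/t) * (x \<bullet> (A *v x))"
  by (simp add: matrix_vector_mult_add_rdistrib scaleR_matrix_vector_assoc[symmetric]
      inner_add_right power2_norm_eq_inner)

lemma resolvent_quadratic_bounds:
  fixes A :: "real^'n^'n"
  assumes A: "\<And>x. x \<bullet> (A *v x) \<ge> 0" and K: "\<And>x. norm (A *v x) \<le> K * norm x" and t: "t \<ge> 1"
  shows "(norm x)\<^sup>2 \<le> x \<bullet> ((mat 1 + (1/t) *\<^sub>R A) *v x)"
    and "x \<bullet> ((mat 1 + (1/t) *\<^sub>R A) *v x) \<le> (1 + K) * (norm x)\<^sup>2"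
proof -
  show "(norm x)\<^sup>2 \<le> x \<bullet> ((mat 1 + (1/t) *\<^sub>R A) *v x)"
    unfolding resolvent_quadratic_eq using A[of x] t by simp
  have "x \<bullet> (A *v x) \<le> norm x * norm (A *v x)" by (metis Cauchy_Schwarz_ineq2 abs_le_iff)
  also have "\<dots> \<le> K * (norm x)\<^sup>2" using mult_left_mono[OF K[of x] norm_ge_zero[of x]]
    by (simp add: power2_eq_square mult_ac)
  finally have "x \<bullet> (A *v x) \<le> K * (norm x)\<^sup>2" .
  moreover have "(1/t) * (x \<bullet> (A *v x)) \<le> x \<bullet> (A *v x)"
    by (rule mult_left_le_one_le) (use t A[of x] in auto)
  ultimately show "x \<bullet> ((mat 1 + (1/t) *\<^sub>R A) *v x) \<le> (1 + K) * (norm x)\<^sup>2"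
    unfolding resolvent_quadratic_eq by (simp add: algebra_simps)
qed

lemma invertible_resolvent:
  fixes A :: "real^'n^'n"
  assumes "\<And>x. x \<bullet> (A *v x) \<ge> 0" "t > 0"
  shows "invertible (mat 1 + (1/t) *\<^sub>R A)"
  by (rule invertible_if_quadratic_pos) (use assms in \<open>simp add: resolvent_quadratic_eq add_pos_nonneg\<close>)

lemma resolvent_inner_contraction:
  fixes A :: "real^'n^'n" and p :: "real^'n" and t \<mu> K :: real
  assumes A: "\<mu> > 0" "\<And>x. x \<bullet> (A *v x) \<ge> \<mu> * (norm x)\<^sup>2"
    and K: "K \<ge> 0" "\<And>x. norm (A *v x) \<le> K * norm x" and t: "t \<ge> 1"
  defines "v \<equiv> p + (1/t) *\<^sub>R (A *v p)"
  shows "p \<bullet> v \<le> (1 - min (1/2) (\<mu> / (t * (1 + K)\<^sup>2))) * (norm v)\<^sup>2"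
proof -
  define \<delta> where "\<delta> = min (1/2) (\<mu> / (t * (1 + K)\<^sup>2))"
  have tp: "t > 0" using t by simp
  have "(norm v)\<^sup>2 = (norm p)\<^sup>2 + (2/t) * (p \<bullet> (A *v p)) + (1/t)\<^sup>2 * (norm (A *v p))\<^sup>2"
    unfolding v_def power2_norm_eq_inner
    by (simp add: inner_add_left inner_add_right inner_commute power2_eq_square field_simps)
  moreover have "p \<bullet> v = (norm p)\<^sup>2 + (1/t) * (p \<bullet> (A *v p))"
    unfolding v_def by (simp add: inner_add_right power2_norm_eq_inner)
  moreover have "(1/t)\<^sup>2 * (norm (A *v p))\<^sup>2 \<ge> 0" by simp
  ultimately have pv: "p \<bullet> v \<le> (norm v)\<^sup>2 - (1/t) * (p \<bullet> (A *v p))"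
    by linarith
  have "norm v \<le> norm p + (1/t) * norm (A *v p)"
    unfolding v_def using norm_triangle_ineq[of p "(1/t) *\<^sub>R (A *v p)"] tp by simp
  also have "(1/t) * norm (A *v p) \<le> norm (A *v p)"
    by (rule mult_left_le_one_le) (use t in auto)
  also have "\<dots> \<le> K * norm p" by (rule K(2))
  finally have "norm v \<le> (1 + K) * norm p" by (simp add: distrib_right)
  then have "(norm v)\<^sup>2 \<le> ((1 + K) * norm p)\<^sup>2" by (simp add: power_mono)
  then have "\<mu> / (t * (1 + K)\<^sup>2) * (norm v)\<^sup>2 \<le> \<mu> / (t * (1 + K)\<^sup>2) * ((1 + K)\<^sup>2 * (norm p)\<^sup>2)"
    using A(1) tp by (intro mult_left_mono) (auto simp: power_mult_distrib)
  also have "\<dots> = (1/t) * (\<mu> * (norm p)\<^sup>2)" using K(1) tp by (simp add: field_simps)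
  also have "\<dots> \<le> (1/t) * (p \<bullet> (A *v p))" using A(2)[of p] tp by (simp add: divide_right_mono)
  finally have "\<mu> / (t * (1 + K)\<^sup>2) * (norm v)\<^sup>2 \<le> (1/t) * (p \<bullet> (A *v p))" .
  moreover have "\<delta> * (norm v)\<^sup>2 \<le> \<mu> / (t * (1 + K)\<^sup>2) * (norm v)\<^sup>2"
    by (intro mult_right_mono) (simp_all add: \<delta>_def)
  ultimately show ?thesis
    using pv unfolding \<delta>_def[symmetric] left_diff_distrib by linarith
qed

lemma resolvent_mult_contraction:
  fixes A S :: "real^'n^'n" and t \<mu> K :: real
  assumes A: "\<mu> > 0" "\<And>x. x \<bullet> (A *v x) \<ge> \<mu> * (norm x)\<^sup>2"
    and K: "K \<ge> 0" "\<And>x. norm (A *v x) \<le> K * norm x"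
    and t: "t \<ge> 1" and S: "\<And>x. norm (S *v x) \<le> norm x"
  defines "R \<equiv> mat 1 + (1/t) *\<^sub>R A"
  obtains \<delta> where "0 < \<delta>" "\<delta> < 1"
    "\<And>u. ((matrix_inv R ** S) *v u) \<bullet> (R *v ((matrix_inv R ** S) *v u)) \<le> (1 - \<delta>) * (u \<bullet> (R *v u))"
proof -
  define \<delta> where "\<delta> = min (1/2) (\<mu> / (t * (1 + K)\<^sup>2))"
  have tp: "t > 0" using t by simp
  have A0: "x \<bullet> (A *v x) \<ge> 0" for x using A(2)[of x] A(1)
    by (meson mult_nonneg_nonneg zero_le_power2 less_imp_le order_trans)
  have iR: "invertible R" unfolding R_def using invertible_resolvent[OF A0 tp] .
  have "((matrix_inv R ** S) *v u) \<bullet> (R *v ((matrix_inv R ** S) *v u)) \<le> (1 - \<delta>) * (u \<bullet> (R *v u))"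
    for u
  proof -
    define p where "p = matrix_inv R *v (S *v u)"
    have Rp: "R *v p = S *v u" unfolding p_def by (rule matrix_inv_mult_vec_cancel[OF iR])
    then have "R *v p = p + (1/t) *\<^sub>R (A *v p)"
      unfolding R_def by (simp add: matrix_vector_mult_add_rdistrib scaleR_matrix_vector_assoc[symmetric])
    then have "p \<bullet> (R *v p) \<le> (1 - \<delta>) * (norm (S *v u))\<^sup>2"
      using resolvent_inner_contraction[OF A K t, of p] unfolding \<delta>_def Rp by simp
    also have "\<dots> \<le> (1 - \<delta>) * (norm u)\<^sup>2"
      using S[of u] by (intro mult_left_mono power_mono) (auto simp: \<delta>_def)
    also have "\<dots> \<le> (1 - \<delta>) * (u \<bullet> (R *v u))"
      using resolvent_quadratic_bounds(1)[OF A0 K(2) t] unfolding R_def[symmetric]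
      by (intro mult_left_mono) (auto simp: \<delta>_def)
    finally show ?thesis by (simp add: p_def matrix_vector_mul_assoc)
  qed
  moreover have "0 < \<delta>" "\<delta> < 1" using A(1) K(1) tp by (auto simp: \<delta>_def)
  ultimately show ?thesis using that by blast
qed

lemma summable_matpow_resolvent_mult:
  fixes A S :: "real^'n^'n"
  assumes pA: "\<And>x. x \<noteq> 0 \<Longrightarrow> x \<bullet> (A *v x) > 0"
    and t: "t \<ge> 1" and S: "\<And>x. norm (S *v x) \<le> norm x"
  shows "summable (\<lambda>m. matpow (matrix_inv (mat 1 + (1/t) *\<^sub>R A) ** S) (Suc m))"
proof -
  define R where "R = mat 1 + (1/t) *\<^sub>R A"
  define P where "P = matrix_inv R ** S"
  obtain \<mu> where mu: "\<mu> > 0" "\<And>x. x \<bullet> (A *v x) \<ge> \<mu> * (norm x)\<^sup>2"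
    using quadratic_pos_coercive[OF pA] by blast
  obtain K where K: "K \<ge> 0" "\<And>x. norm (A *v x) \<le> K * norm x"
    using matrix_vector_mult_bounded by blast
  have A0: "x \<bullet> (A *v x) \<ge> 0" for x using pA[of x] by (cases "x = 0") auto
  note R = resolvent_quadratic_bounds[OF A0 K(2) t, folded R_def]
  obtain \<delta> where d: "0 < \<delta>" "\<delta> < 1"
    and contr: "\<And>u. (P *v u) \<bullet> (R *v (P *v u)) \<le> (1 - \<delta>) * (u \<bullet> (R *v u))"
    using resolvent_mult_contraction[OF mu K t S] unfolding P_def R_def by blast
  have iter: "(matpow P m *v u) \<bullet> (R *v (matpow P m *v u)) \<le> (1 - \<delta>) ^ m * (u \<bullet> (R *v u))" for m u
  proof (induction m)
    case (Suc m)
    have "(matpow P (Suc m) *v u) \<bullet> (R *v (matpow P (Suc m) *v u))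
        \<le> (1 - \<delta>) * ((matpow P m *v u) \<bullet> (R *v (matpow P m *v u)))"
      using contr by (simp add: matrix_vector_mul_assoc[symmetric])
    also have "\<dots> \<le> (1 - \<delta>) * ((1 - \<delta>) ^ m * (u \<bullet> (R *v u)))"
      using Suc d by (intro mult_left_mono) auto
    finally show ?case by simp
  qed simp
  have "(norm (matpow P m *v u))\<^sup>2 \<le> (1 + K) * (1 - \<delta>) ^ m * (norm u)\<^sup>2" for m u
  proof -
    have "(norm (matpow P m *v u))\<^sup>2 \<le> (1 - \<delta>) ^ m * (u \<bullet> (R *v u))"
      using R(1) iter by (rule order_trans)
    also have "\<dots> \<le> (1 - \<delta>) ^ m * ((1 + K) * (norm u)\<^sup>2)"
      using R(2) d by (intro mult_left_mono) auto
    finally show ?thesis by (simp add: mult_ac)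
  qed
  then show ?thesis
    unfolding P_def R_def by (rule summable_matpow_Suc_if_geometric) (use d K in auto)
qed

lemma Qmat_eq:
  fixes Gm :: "real^'n^'n"
  assumes "invertible Gm" "t \<noteq> 0"
  shows "Qmat Gm t = matrix_inv (mat 1 + (1/t) *\<^sub>R matrix_inv Gm)"
proof -
  have "(t *\<^sub>R Gm) ** ((1/t) *\<^sub>R matrix_inv Gm) = (t * (1/t)) *\<^sub>R (Gm ** matrix_inv Gm)"
    by (simp add: matrix_scalar_ac scalar_matrix_assoc[symmetric])
  also have "\<dots> = mat 1" using assms by (simp add: matrix_inv_right)
  finally show ?thesis unfolding Qmat_def by (simp add: matrix_inv_eqI)
qed

text \<open>Since t (Q^-1 - S) = Gm^-1 + t (I - S), the matrix I - Q S has the inverse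
  t (Gm^-1 + t (I - S))^-1 Q^-1, which the Neumann series computes.\<close>
lemma Qmat_series_eq:
  fixes Gm S :: "real^'n^'n"
  assumes pd: "pos_def_matrix Gm" and t: "t \<ge> 1"
    and S: "diag_mat S" "\<And>i. \<bar>S $ i $ i\<bar> \<le> 1"
  shows "(1 / t) *\<^sub>R (\<Sum>m. matpow (Qmat Gm t ** S) (Suc m))
       = matrix_inv (matrix_inv Gm + t *\<^sub>R (mat 1 - S)) ** (mat 1 + (1/t) *\<^sub>R matrix_inv Gm)
         - (1/t) *\<^sub>R mat 1"
proof -
  define A where "A = matrix_inv Gm"
  define R where "R = mat 1 + (1/t) *\<^sub>R A"
  define B where "B = A + t *\<^sub>R (mat 1 - S)"
  define P where "P = matrix_inv R ** S"
  define N where "N = (\<Sum>m. matpow P (Suc m))"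
  define X where "X = t *\<^sub>R (matrix_inv B ** R)"
  have A: "pos_def_matrix A" unfolding A_def using pos_def_matrix_inv[OF pd] .
  have tp: "t > 0" using t by simp
  have sm: "summable (\<lambda>m. matpow P (Suc m))" unfolding P_def R_def
    by (rule summable_matpow_resolvent_mult[OF pos_def_matrixD(2)[OF A] t norm_diag_mat_mult_le[OF S]])
  have L: "diag_mat (t *\<^sub>R (mat 1 - S))" "\<And>i. (t *\<^sub>R (mat 1 - S)) $ i $ i \<ge> 0"
    using diag_mat_scaleR_diff_nonneg[OF S(1)] tp S(2) by (auto simp: abs_le_iff)
  have iB: "invertible B" unfolding B_def
    by (intro pos_def_matrix_invertible pos_def_matrix_add_nonneg[OF A] transpose_diag_mat
        diag_mat_quadratic_nonneg L)
  have iR: "invertible R"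
    unfolding R_def using invertible_resolvent[OF pos_def_matrixD(3)[OF A] tp] .
  have "mat 1 - P = matrix_inv R ** (R - S)"
    unfolding P_def by (simp add: matrix_mul_diff_ldistrib matrix_inv_left[OF iR])
  then have "(mat 1 - P) ** X = matrix_inv R ** (t *\<^sub>R (R - S)) ** matrix_inv B ** R"
    unfolding X_def by (simp add: matrix_mul_assoc matrix_scalar_ac scalar_matrix_assoc)
  also have "t *\<^sub>R (R - S) = B"
    unfolding B_def R_def using tp by (simp add: algebra_simps)
  also have "matrix_inv R ** B ** matrix_inv B ** R = mat 1"
    by (simp add: matrix_mul_assoc[symmetric])
      (simp add: matrix_mul_assoc matrix_inv_right[OF iB] matrix_inv_left[OF iR])
  finally have "(mat 1 - P) ** X = mat 1" .
  then have "mat 1 + N = (mat 1 + N) ** (mat 1 - P) ** X" by (simp add: matrix_mul_assoc[symmetric])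
  also have "\<dots> = X" unfolding N_def neumann_series_left_inverse[OF sm] by simp
  finally have "(1/t) *\<^sub>R (N + mat 1) = matrix_inv B ** R"
    unfolding X_def using tp by (simp add: add.commute)
  then have "(1/t) *\<^sub>R N = matrix_inv B ** R - (1/t) *\<^sub>R mat 1"
    by (simp add: scaleR_add_right eq_diff_eq)
  then show ?thesis
    unfolding N_def P_def R_def B_def A_def Qmat_eq[OF pos_def_matrix_invertible[OF pd] tp[THEN less_imp_neq, symmetric]] .
qed

section \<open>Comparison of the two sides\<close>

lemma resolvent_bracket_eq:
  fixes A L :: "real^'n^'n"
  assumes sA: "transpose A = A" and sL: "transpose L = L" and iB: "invertible (A + L)"
  defines "y \<equiv> matrix_inv (A + L) *v (L *v ones)"
  defines "D \<equiv> A *v ones"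
  shows "- (ones \<bullet> (A *v ones)) + D \<bullet> ((matrix_inv (A + L) ** (mat 1 + (1/t) *\<^sub>R A) - (1/t) *\<^sub>R mat 1) *v D)
           = - (D \<bullet> y) - (1/t) * (D \<bullet> (A *v y))"
proof -
  define Bi where "Bi = matrix_inv (A + L)"
  have sBi: "transpose Bi = Bi"
    unfolding Bi_def using transpose_matrix_inv_symmetric[OF iB transpose_add_symmetric[OF sA sL]] .
  have "(A + L) *v y = L *v ones" unfolding y_def by (rule matrix_inv_mult_vec_cancel[OF iB])
  then have "(A + L) *v (ones - y) = D"
    by (simp add: D_def matrix_vector_mult_diff_distrib matrix_vector_mult_add_rdistrib)
  then have BiD: "Bi *v D = ones - y"
    by (metis Bi_def matrix_vector_mul_assoc matrix_inv_left[OF iB] matrix_vector_mul_lid)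
  have e1: "D \<bullet> (Bi *v (A *v D)) = (A *v D) \<bullet> (ones - y)"
    using inner_symmetric_matrix_commute[OF sBi, of D "A *v D"] BiD by simp
  have e2: "(A *v D) \<bullet> ones = D \<bullet> D"
    using inner_symmetric_matrix_commute[OF sA, of ones D] by (simp add: D_def inner_commute)
  have e3: "(A *v D) \<bullet> y = D \<bullet> (A *v y)"
    using inner_symmetric_matrix_commute[OF sA, of y D] by (simp add: inner_commute)
  have "(Bi ** (mat 1 + (1/t) *\<^sub>R A) - (1/t) *\<^sub>R mat 1) *v D
      = Bi *v D + (1/t) *\<^sub>R (Bi *v (A *v D)) - (1/t) *\<^sub>R D"
    by (simp add: matrix_vector_mult_diff_rdistrib matrix_vector_mul_assoc[symmetric] matrix_add_ldistrib
        matrix_vector_mult_add_rdistrib scaleR_matrix_vector_assoc[symmetric] matrix_scalar_ac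
        matrix_vector_mult_scaleR)
  then have "D \<bullet> ((Bi ** (mat 1 + (1/t) *\<^sub>R A) - (1/t) *\<^sub>R mat 1) *v D)
      = D \<bullet> (ones - y) + (1/t) * ((A *v D) \<bullet> (ones - y)) - (1/t) * (D \<bullet> D)"
    using BiD e1 by (simp add: inner_add_right inner_diff_right)
  also have "\<dots> = ones \<bullet> (A *v ones) - D \<bullet> y - (1/t) * (D \<bullet> (A *v y))"
    using e2 e3 by (simp add: D_def inner_diff_right inner_diff_left inner_commute algebra_simps)
  finally show ?thesis unfolding Bi_def by simp
qed

lemma shift_inner_split:
  fixes A L :: "real^'n^'n"
  assumes sA: "transpose A = A" and y: "A *v y = L *v (ones - y)"
  shows "(A *v ones) \<bullet> y = y \<bullet> (A *v y) + (ones - y) \<bullet> (L *v (ones - y))"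
proof -
  have "(A *v ones) \<bullet> y = ones \<bullet> (A *v y)"
    using inner_symmetric_matrix_commute[OF sA, of y ones] by (simp add: inner_commute)
  also have "\<dots> = y \<bullet> (A *v y) + (ones - y) \<bullet> (A *v y)" by (simp add: inner_diff_left)
  finally show ?thesis unfolding y .
qed

text \<open>With a = y A y and b = (1 - y) L (1 - y), so that D y = a + b, Cauchy-Schwarz in the
  form A gives (D A y)^2 <= (D A D) a, and in the form L (using A y = L (1 - y)) gives
  (D A y)^2 <= (D L D) b. The first is good when a is bounded below; otherwise y is small,
  whence the trace of L, and with it D L D, is at most of order b.\<close>
lemma shift_inner_sq_bound:
  fixes A L :: "real^'n^'n" and \<mu> :: real
  assumes sA: "transpose A = A" and mu: "\<mu> > 0" "\<And>x. x \<bullet> (A *v x) \<ge> \<mu> * (norm x)\<^sup>2"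
    and L: "diag_mat L" "\<And>i. L $ i $ i \<ge> 0"
    and y: "A *v y = L *v (ones - y)"
  defines "D \<equiv> A *v ones"
  shows "(D \<bullet> (A *v y))\<^sup>2 \<le> (4 * (D \<bullet> (A *v D)) / \<mu> + 4 * (D \<bullet> D)) * (D \<bullet> y)\<^sup>2"
proof -
  note sL = transpose_diag_mat[OF L(1)] and pL = diag_mat_quadratic_nonneg[OF L]
  have pA: "x \<bullet> (A *v x) \<ge> 0" for x using mu(2)[of x] mu(1)
    by (meson mult_nonneg_nonneg zero_le_power2 less_imp_le order_trans)
  define a where "a = y \<bullet> (A *v y)"
  define b where "b = (ones - y) \<bullet> (L *v (ones - y))"
  have ab: "a \<ge> \<mu> * (norm y)\<^sup>2" "a \<ge> 0" "b \<ge> 0" using mu(2) pA pL by (auto simp: a_def b_def)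
  have Dy: "D \<bullet> y = a + b" unfolding D_def a_def b_def by (rule shift_inner_split[OF sA y])
  have D0: "D \<bullet> (A *v D) \<ge> 0" "D \<bullet> D \<ge> 0" using pA by auto
  have "(D \<bullet> (A *v y))\<^sup>2 \<le> (4 * (D \<bullet> (A *v D)) / \<mu> + 4 * (D \<bullet> D)) * (a + b)\<^sup>2"
  proof (cases "a < \<mu> / 4")
    case True
    then have "\<mu> * (norm y)\<^sup>2 \<le> \<mu> * (1/2)\<^sup>2" using ab(1) by (simp add: power2_eq_square)
    then have "(norm y)\<^sup>2 \<le> (1/2)\<^sup>2" using mu(1) by simp
    then have "norm y \<le> 1/2" by (simp add: power2_le_iff_abs_le)
    have "(D \<bullet> (A *v y))\<^sup>2 \<le> (D \<bullet> (L *v D)) * b"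
      unfolding y b_def by (rule quadratic_form_Cauchy_Schwarz[OF sL pL])
    also have "\<dots> \<le> ((D \<bullet> D) * (4 * b)) * b"
      using diag_mat_quadratic_le_trace[OF L, of D] diag_mat_trace_le[OF L \<open>norm y \<le> 1/2\<close>] ab(3) D0(2)
      unfolding b_def by (meson mult_left_mono mult_right_mono order_trans)
    also have "\<dots> \<le> 4 * (D \<bullet> D) * (a + b)\<^sup>2"
      using ab D0 by (simp add: power2_eq_square mult_left_mono mult_mono algebra_simps)
    also have "\<dots> \<le> (4 * (D \<bullet> (A *v D)) / \<mu> + 4 * (D \<bullet> D)) * (a + b)\<^sup>2"
      using D0 mu(1) by (intro mult_right_mono) auto
    finally show ?thesis .
  next
    case False
    have "(D \<bullet> (A *v y))\<^sup>2 \<le> (D \<bullet> (A *v D)) * a"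
      unfolding a_def by (rule quadratic_form_Cauchy_Schwarz[OF sA pA])
    also have "\<dots> \<le> (D \<bullet> (A *v D)) * (4 * a / \<mu> * a)"
      using False mu(1) D0(1) ab(2) by (intro mult_left_mono) (auto simp: field_simps)
    also have "\<dots> \<le> (4 * (D \<bullet> (A *v D)) / \<mu>) * (a + b)\<^sup>2"
      using ab D0 mu(1) by (simp add: power2_eq_square mult_left_mono mult_mono algebra_simps)
    also have "\<dots> \<le> (4 * (D \<bullet> (A *v D)) / \<mu> + 4 * (D \<bullet> D)) * (a + b)\<^sup>2"
      using D0 by (intro mult_right_mono) auto
    finally show ?thesis .
  qed
  then show ?thesis unfolding Dy .
qed

lemma shift_inner_bound:
  fixes A :: "real^'n^'n"
  assumes A: "pos_def_matrix A"
  defines "D \<equiv> A *v ones"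
  obtains K where "K \<ge> 0"
    "\<And>L y. diag_mat L \<Longrightarrow> (\<And>i. L $ i $ i \<ge> 0) \<Longrightarrow> A *v y = L *v (ones - y) \<Longrightarrow>
       D \<bullet> y \<ge> 0 \<and> \<bar>D \<bullet> (A *v y)\<bar> \<le> K * (D \<bullet> y)"
proof -
  note sA = pos_def_matrixD(1)[OF A] and pA = pos_def_matrixD(3)[OF A]
  obtain \<mu> where mu: "\<mu> > 0" "\<And>x. x \<bullet> (A *v x) \<ge> \<mu> * (norm x)\<^sup>2"
    using quadratic_pos_coercive[OF pos_def_matrixD(2)[OF A]] by blast
  define K where "K = sqrt (4 * (D \<bullet> (A *v D)) / \<mu> + 4 * (D \<bullet> D))"
  have "K \<ge> 0" unfolding K_def using pA[of D] mu(1) by simp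
  moreover have "D \<bullet> y \<ge> 0 \<and> \<bar>D \<bullet> (A *v y)\<bar> \<le> K * (D \<bullet> y)"
    if L: "diag_mat L" "\<And>i. L $ i $ i \<ge> 0" and y: "A *v y = L *v (ones - y)" for L y
  proof
    show Dy: "D \<bullet> y \<ge> 0"
      unfolding D_def shift_inner_split[OF sA y]
      using pA diag_mat_quadratic_nonneg[OF L] by (simp add: add_nonneg_nonneg)
    have "sqrt ((D \<bullet> (A *v y))\<^sup>2) \<le> sqrt ((4 * (D \<bullet> (A *v D)) / \<mu> + 4 * (D \<bullet> D)) * (D \<bullet> y)\<^sup>2)"
      using shift_inner_sq_bound[OF sA mu L y] unfolding D_def by (rule real_sqrt_le_mono)
    then show "\<bar>D \<bullet> (A *v y)\<bar> \<le> K * (D \<bullet> y)"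
      unfolding K_def using Dy by (simp add: real_sqrt_mult)
  qed
  ultimately show ?thesis using that by blast
qed

lemma exists_relative_error:
  fixes e \<delta> K t :: real
  assumes e: "e \<ge> 0" and d: "\<bar>\<delta>\<bar> \<le> K * e" and K: "K \<ge> 0" and t: "t \<ge> 2 * K" "t > 0"
  shows "\<exists>r. \<bar>r\<bar> \<le> 2 * K / t \<and> - e = (- e - \<delta> / t) * (1 + r)"
proof (cases "e = 0")
  case True
  then show ?thesis using d K t by (intro exI[of _ 0]) auto
next
  case False
  then have ep: "e > 0" using e by simp
  have dt: "\<bar>\<delta> / t\<bar> \<le> K * e / t" using d t by (simp add: abs_div divide_right_mono)
  also have "K * e / t \<le> e / 2" using t ep K by (simp add: field_simps)
  finally have X: "\<bar>- e - \<delta> / t\<bar> \<ge> e / 2" by linarith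
  define r where "r = (\<delta> / t) / (- e - \<delta> / t)"
  have "(- e - \<delta> / t) * r = \<delta> / t" unfolding r_def using X ep by auto
  then have "- e = (- e - \<delta> / t) * (1 + r)" by (simp add: distrib_left)
  moreover have "\<bar>r\<bar> \<le> (K * e / t) / (e / 2)"
    unfolding r_def abs_divide using dt X ep K t d by (intro frac_le) auto
  moreover have "(K * e / t) / (e / 2) = 2 * K / t" using ep by (simp add: field_simps)
  ultimately show ?thesis by auto
qed

theorem theorem1p6:
  fixes Gm :: "real^'n^'n" and \<alpha> :: real
  assumes "pos_def_matrix Gm"
    and "irreducible_matrix Gm"
  shows "\<exists>C T. \<forall>t \<ge> T. \<forall>S :: real^'n^'n.
           (\<forall>i j. i \<noteq> j \<longrightarrow> S $ i $ j = 0) \<and> (\<forall>i. 0 \<le> S $ i $ i \<and> S $ i $ i \<le> 1) \<longrightarrow>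
           (\<exists>r. \<bar>r\<bar> \<le> C / t \<and>
              Phi2 Gm \<alpha> t S =
                \<alpha>\<^sup>2 / 2 * (- (ones \<bullet> (matrix_inv Gm *v ones))
                   + Dvec Gm \<bullet> (((1 / t) *\<^sub>R (\<Sum>m. matpow (Qmat Gm t ** S) (Suc m))) *v Dvec Gm))
                * (1 + r))"
proof -
  define A where "A = matrix_inv Gm"
  define D where "D = A *v ones"
  have A: "pos_def_matrix A" unfolding A_def using pos_def_matrix_inv[OF assms(1)] .
  obtain K where K: "K \<ge> 0" and bound: "\<And>L y. diag_mat L \<Longrightarrow> (\<And>i. L $ i $ i \<ge> 0) \<Longrightarrow>
      A *v y = L *v (ones - y) \<Longrightarrow> D \<bullet> y \<ge> 0 \<and> \<bar>D \<bullet> (A *v y)\<bar> \<le> K * (D \<bullet> y)"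
    using shift_inner_bound[OF A] unfolding D_def by blast
  show ?thesis
  proof (rule exI[of _ "2 * K"], rule exI[of _ "2 * K + 1"], intro allI impI, elim conjE)
    fix t :: real and S :: "real^'n^'n"
    assume t: "2 * K + 1 \<le> t"
      and "\<forall>i j. i \<noteq> j \<longrightarrow> S $ i $ j = 0" "\<forall>i. 0 \<le> S $ i $ i \<and> S $ i $ i \<le> 1"
    then have S: "diag_mat S" "\<And>i. \<bar>S $ i $ i\<bar> \<le> 1" "\<And>i. S $ i $ i \<le> 1" by (auto simp: diag_mat_def)
    define L where "L = t *\<^sub>R (mat 1 - S)"
    define y where "y = matrix_inv (A + L) *v (L *v ones)"
    have tp: "t \<ge> 0" using t K by simp
    note L = diag_mat_scaleR_diff_nonneg[OF S(1) tp S(3), folded L_def]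
    have iB: "invertible (A + L)"
      by (intro pos_def_matrix_invertible pos_def_matrix_add_nonneg[OF A] transpose_diag_mat
          diag_mat_quadratic_nonneg L)
    have "A *v y = L *v (ones - y)"
      using matrix_inv_mult_vec_cancel[OF iB, of "L *v ones"] unfolding y_def[symmetric]
      by (simp add: matrix_vector_mult_add_rdistrib matrix_vector_mult_diff_distrib eq_diff_eq)
    with bound L have Dy: "D \<bullet> y \<ge> 0" "\<bar>D \<bullet> (A *v y)\<bar> \<le> K * (D \<bullet> y)" by blast+
    have "Phi2 Gm \<alpha> t S = - (\<alpha>\<^sup>2 / 2) * (D \<bullet> y)"
      using Phi2_eq[OF assms(1) S(1,3) tp]
      unfolding Dvec_eq A_def[symmetric] L_def[symmetric] y_def[symmetric] D_def[symmetric] .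
    moreover have "(1 / t) *\<^sub>R (\<Sum>m. matpow (Qmat Gm t ** S) (Suc m))
        = matrix_inv (A + L) ** (mat 1 + (1/t) *\<^sub>R A) - (1/t) *\<^sub>R mat 1"
      using Qmat_series_eq[OF assms(1) _ S(1,2)] t K unfolding A_def L_def by simp
    then have "- (ones \<bullet> (matrix_inv Gm *v ones))
        + Dvec Gm \<bullet> (((1 / t) *\<^sub>R (\<Sum>m. matpow (Qmat Gm t ** S) (Suc m))) *v Dvec Gm)
        = - (D \<bullet> y) - (D \<bullet> (A *v y)) / t"
      using resolvent_bracket_eq[OF pos_def_matrixD(1)[OF A] transpose_diag_mat[OF L(1)] iB, of t]
      unfolding Dvec_eq A_def[symmetric] y_def[symmetric] D_def[symmetric] by simp
    moreover obtain r where "\<bar>r\<bar> \<le> 2 * K / t"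
      and "- (D \<bullet> y) = (- (D \<bullet> y) - (D \<bullet> (A *v y)) / t) * (1 + r)"
      using exists_relative_error[OF Dy K, of t] t K by fastforce
    ultimately show "\<exists>r. \<bar>r\<bar> \<le> 2 * K / t \<and> Phi2 Gm \<alpha> t S =
        \<alpha>\<^sup>2 / 2 * (- (ones \<bullet> (matrix_inv Gm *v ones))
        + Dvec Gm \<bullet> (((1 / t) *\<^sub>R (\<Sum>m. matpow (Qmat Gm t ** S) (Suc m))) *v Dvec Gm)) * (1 + r)"
      by (metis mult.assoc mult_minus_right mult_minus_left)
  qed
qed

end
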